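(* There exists a ring satisfying (NK) if and only if there exists a countably generated $F$-algebra satisfying (NK), where $F=\mathbb Q$ or $F=\mathbb Z_p$ for some prime number $p$. Equivalently, Köthe's Conjecture holds if and only if there is no countably generated $F$-algebra satisfying (NK) with $F=\mathbb Q$ or $F=\mathbb Z_p$, $p$ prime.
   Context: All rings are associative with unit. A right ideal is nil if all its elements are nilpotent. A ring satisfies the condition (NK) if it contains two nil right ideals whose sum is not nil. Köthe's Conjecture (every ring with no non-zero nil two-sided ideal has no non-zero nil one-sided ideal) is known to be equivalent to the statement that no ring satisfies (NK). *)

theory Defs
  imports "HOL-Algebra.Algebra" "HOL-Number_Theory.Residues"
begin

definition right_ideal :: "('a, 'b) ring_scheme \<Rightarrow> 'a set \<Rightarrow> bool" where
  "right_ideal R I \<longleftrightarrow> additive_subgroup I R \<and>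
     (\<forall>x\<in>I. \<forall>r\<in>carrier R. x \<otimes>\<^bsub>R\<^esub> r \<in> I)"

definition nilpotent_elem :: "('a, 'b) ring_scheme \<Rightarrow> 'a \<Rightarrow> bool" where
  "nilpotent_elem R x \<longleftrightarrow> (\<exists>n::nat. x [^]\<^bsub>R\<^esub> n = \<zero>\<^bsub>R\<^esub>)"

definition nil_set :: "('a, 'b) ring_scheme \<Rightarrow> 'a set \<Rightarrow> bool" where
  "nil_set R I \<longleftrightarrow> (\<forall>x\<in>I. nilpotent_elem R x)"

definition NK :: "('a, 'b) ring_scheme \<Rightarrow> bool" where
  "NK R \<longleftrightarrow> (\<exists>I J. right_ideal R I \<and> right_ideal R J \<and> nil_set R I \<and> nil_set R J \<and>
      \<not> nil_set R (I <+>\<^bsub>R\<^esub> J))"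

definition rat_ring :: "rat ring" where
  "rat_ring = \<lparr>carrier = UNIV, monoid.mult = \<lambda>x y. x * y, one = 1, ring.zero = 0, ring.add = \<lambda>x y. x + y\<rparr>"

definition algebra_over :: "('f, 'c) ring_scheme \<Rightarrow> ('a, 'b) ring_scheme \<Rightarrow> ('f \<Rightarrow> 'a) \<Rightarrow> bool" where
  "algebra_over F A \<phi> \<longleftrightarrow> ring A \<and> \<phi> \<in> ring_hom F A \<and>
     (\<forall>c\<in>carrier F. \<forall>x\<in>carrier A. \<phi> c \<otimes>\<^bsub>A\<^esub> x = x \<otimes>\<^bsub>A\<^esub> \<phi> c)"

definition countably_generated_algebra ::
  "('f, 'c) ring_scheme \<Rightarrow> ('a, 'b) ring_scheme \<Rightarrow> ('f \<Rightarrow> 'a) \<Rightarrow> bool" where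
  "countably_generated_algebra F A \<phi> \<longleftrightarrow> algebra_over F A \<phi> \<and>
     (\<exists>S. countable S \<and> S \<subseteq> carrier A \<and> carrier A = generate_ring A (\<phi> ` carrier F \<union> S))"

definition exists_cg_NK_algebra :: "'a itself \<Rightarrow> bool" where
  "exists_cg_NK_algebra _ \<longleftrightarrow>
     (\<exists>(A::'a ring) \<phi>. countably_generated_algebra rat_ring A \<phi> \<and> NK A) \<or>
     (\<exists>p::int. Factorial_Ring.prime p \<and> (\<exists>(A::'a ring) \<phi>. countably_generated_algebra (residue_ring p) A \<phi> \<and> NK A))"

end

theory Submission
  imports Defs "HOL-Library.Countable"
begin

(*
  Pick a, b with aR and bR nil but c = a + b not nilpotent; passing to the subring generated by
  a and b makes the ring countable.  If some prime p divides no power of c, then R/pR is a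
  countable Z_p-algebra in which the images of a and b still witness (NK).  Otherwise every
  non-zero integer divides some power of c; then k c^n = 0 would make c nilpotent, so no power
  of c is torsion and a/1, b/1 witness (NK) in the countable Q-algebra Q \<otimes> R (the localisation
  at the positive integers).  An enumeration of a countable carrier moves the algebra onto nat.
  The converse is immediate, since an F-algebra is in particular a ring.
*)

(* The ideal-product notation would make integer multiples [k] \<cdot> x ambiguous. *)
no_notation ideal_prod (infixl \<open>\<cdot>\<index>\<close> 80)

section \<open>Witnesses of (NK)\<close>

definition NK_pair :: "('a, 'b) ring_scheme \<Rightarrow> 'a \<Rightarrow> 'a \<Rightarrow> bool" where
  "NK_pair R a b \<longleftrightarrow> a \<in> carrier R \<and> b \<in> carrier R \<and>
     (\<forall>r\<in>carrier R. nilpotent_elem R (a \<otimes>\<^bsub>R\<^esub> r)) \<and>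
     (\<forall>r\<in>carrier R. nilpotent_elem R (b \<otimes>\<^bsub>R\<^esub> r)) \<and>
     \<not> nilpotent_elem R (a \<oplus>\<^bsub>R\<^esub> b)"

lemma (in ring) right_ideal_principal:
  assumes "a \<in> carrier R"
  shows "right_ideal R ((\<otimes>) a ` carrier R)"
proof -
  have "subgroup ((\<otimes>) a ` carrier R) (add_monoid R)"
  proof (rule add.subgroupI)
    fix x y assume "x \<in> (\<otimes>) a ` carrier R" "y \<in> (\<otimes>) a ` carrier R"
    then obtain r s where "r \<in> carrier R" "s \<in> carrier R" "x = a \<otimes> r" "y = a \<otimes> s" by blast
    then show "\<ominus> x \<in> (\<otimes>) a ` carrier R" "x \<oplus> y \<in> (\<otimes>) a ` carrier R"
      using assms by (auto simp: r_minus r_distr intro: image_eqI[of _ _ "\<ominus> r"] image_eqI[of _ _ "r \<oplus> s"])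
  qed (use assms in auto)
  then show ?thesis
    using assms unfolding right_ideal_def
    by (auto intro!: additive_subgroupI simp: m_assoc)
qed

lemma NK_iff_NK_pair:
  fixes R (structure)
  assumes "ring R"
  shows "NK R \<longleftrightarrow> (\<exists>a b. NK_pair R a b)"
proof
  interpret ring R by fact
  assume "NK R"
  then obtain I J where "right_ideal R I" "right_ideal R J" "nil_set R I" "nil_set R J"
    and "\<not> nil_set R (I <+>\<^bsub>R\<^esub> J)"
    unfolding NK_def by blast
  moreover from this obtain i j where "i \<in> I" "j \<in> J" "\<not> nilpotent_elem R (i \<oplus> j)"
    unfolding nil_set_def set_add_def' by blast
  ultimately have "NK_pair R i j"
    unfolding NK_pair_def right_ideal_def nil_set_def using additive_subgroup.a_subset by blast
  then show "\<exists>a b. NK_pair R a b" by blast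
next
  interpret ring R by fact
  assume "\<exists>a b. NK_pair R a b"
  then obtain a b where ab: "NK_pair R a b" by blast
  then have "a \<in> carrier R" "b \<in> carrier R" unfolding NK_pair_def by auto
  then have "a \<in> (\<otimes>) a ` carrier R" "b \<in> (\<otimes>) b ` carrier R"
    by (auto intro!: image_eqI[where x = \<one>])
  then have "a \<oplus> b \<in> (\<otimes>) a ` carrier R <+>\<^bsub>R\<^esub> (\<otimes>) b ` carrier R"
    unfolding set_add_def' by blast
  then show "NK R"
    using ab right_ideal_principal \<open>a \<in> carrier R\<close> \<open>b \<in> carrier R\<close>
    unfolding NK_def NK_pair_def nil_set_def by blast
qed

lemma nilpotent_elem_ring_hom:
  assumes "ring_hom_ring R S h" "x \<in> carrier R" "nilpotent_elem R x"
  shows "nilpotent_elem S (h x)"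
proof -
  interpret ring_hom_ring R S h by fact
  from assms(3) obtain n :: nat where "x [^]\<^bsub>R\<^esub> n = \<zero>\<^bsub>R\<^esub>" unfolding nilpotent_elem_def by blast
  then have "h x [^]\<^bsub>S\<^esub> n = \<zero>\<^bsub>S\<^esub>" by (metis hom_nat_pow[OF assms(2)] hom_zero)
  then show ?thesis unfolding nilpotent_elem_def by blast
qed

lemma (in ring) nilpotent_elem_mult_commuting:
  assumes "x \<in> carrier R" "u \<in> carrier R" "x \<otimes> u = u \<otimes> x" "nilpotent_elem R x"
  shows "nilpotent_elem R (x \<otimes> u)"
proof -
  from assms(4) obtain n :: nat where "x [^] n = \<zero>" unfolding nilpotent_elem_def by blast
  then have "(x \<otimes> u) [^] n = \<zero>" using assms(1-3) by (simp add: pow_mult_distrib)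
  then show ?thesis unfolding nilpotent_elem_def by blast
qed

text \<open>The hypothesis \<open>fractions\<close> covers surjective homomorphisms (take \<open>u = \<one>\<close>) and
  localisations at central elements.\<close>
lemma NK_pair_ring_hom:
  fixes R (structure)
  assumes hom: "ring_hom_ring R S h" and ab: "NK_pair R a b"
    and fractions: "\<And>y. y \<in> carrier S \<Longrightarrow> \<exists>r\<in>carrier R. \<exists>u\<in>carrier S.
                      y = h r \<otimes>\<^bsub>S\<^esub> u \<and> (\<forall>z\<in>carrier S. u \<otimes>\<^bsub>S\<^esub> z = z \<otimes>\<^bsub>S\<^esub> u)"
    and not_nil: "\<not> nilpotent_elem S (h (a \<oplus>\<^bsub>R\<^esub> b))"
  shows "NK_pair S (h a) (h b)"
proof -
  interpret ring_hom_ring R S h by fact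
  have right_nil: "nilpotent_elem S (h v \<otimes>\<^bsub>S\<^esub> y)"
    if v: "v \<in> carrier R" "\<forall>r\<in>carrier R. nilpotent_elem R (v \<otimes> r)" and y: "y \<in> carrier S" for v y
  proof -
    obtain r u where r: "r \<in> carrier R" and u: "u \<in> carrier S" "y = h r \<otimes>\<^bsub>S\<^esub> u"
      and central: "\<forall>z\<in>carrier S. u \<otimes>\<^bsub>S\<^esub> z = z \<otimes>\<^bsub>S\<^esub> u"
      using fractions[OF y] by blast
    have "nilpotent_elem S (h v \<otimes>\<^bsub>S\<^esub> h r)"
      using nilpotent_elem_ring_hom[OF hom, of "v \<otimes> r"] v r by simp
    then have "nilpotent_elem S (h v \<otimes>\<^bsub>S\<^esub> h r \<otimes>\<^bsub>S\<^esub> u)"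
      using central u v r by (intro S.nilpotent_elem_mult_commuting[of "h v \<otimes>\<^bsub>S\<^esub> h r" u]) auto
    then show ?thesis using u v r by (simp add: S.m_assoc)
  qed
  show ?thesis
    using ab not_nil right_nil unfolding NK_pair_def by auto
qed

section \<open>Countable subrings and countable algebras over nat\<close>

datatype 'v ring_term =
  One | Var 'v | Neg "'v ring_term" | Add "'v ring_term" "'v ring_term" | Mul "'v ring_term" "'v ring_term"

instance ring_term :: (countable) countable by countable_datatype

fun eval_ring_term :: "('a, 'b) ring_scheme \<Rightarrow> ('v \<Rightarrow> 'a) \<Rightarrow> 'v ring_term \<Rightarrow> 'a" where
  "eval_ring_term R g One = \<one>\<^bsub>R\<^esub>"
| "eval_ring_term R g (Var v) = g v"
| "eval_ring_term R g (Neg t) = \<ominus>\<^bsub>R\<^esub> eval_ring_term R g t"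
| "eval_ring_term R g (Add t u) = eval_ring_term R g t \<oplus>\<^bsub>R\<^esub> eval_ring_term R g u"
| "eval_ring_term R g (Mul t u) = eval_ring_term R g t \<otimes>\<^bsub>R\<^esub> eval_ring_term R g u"

lemma generate_ring_subset_range_eval_ring_term:
  assumes "H \<subseteq> range g"
  shows "generate_ring R H \<subseteq> range (eval_ring_term R g)"
proof
  fix x assume "x \<in> generate_ring R H"
  then show "x \<in> range (eval_ring_term R g)"
  proof (induction rule: generate_ring.induct)
    case one
    show ?case by (rule range_eqI[of _ _ One]) simp
  next
    case (incl h)
    then obtain v where "h = g v" using assms by blast
    then show ?case by (intro range_eqI[of _ _ "Var v"]) simp
  next
    case (a_inv h)
    then obtain t where "h = eval_ring_term R g t" by blast
    then show ?case by (intro range_eqI[of _ _ "Neg t"]) simp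
  next
    case (eng_add h k)
    then obtain t u where "h = eval_ring_term R g t" "k = eval_ring_term R g u" by blast
    then show ?case by (intro range_eqI[of _ _ "Add t u"]) simp
  next
    case (eng_mult h k)
    then obtain t u where "h = eval_ring_term R g t" "k = eval_ring_term R g u" by blast
    then show ?case by (intro range_eqI[of _ _ "Mul t u"]) simp
  qed
qed

lemma countable_generate_ring:
  assumes "countable H"
  shows "countable (generate_ring R H)"
proof (rule countable_subset)
  show "generate_ring R H \<subseteq> range (eval_ring_term R (from_nat_into H))"
    using assms by (intro generate_ring_subset_range_eval_ring_term subset_range_from_nat_into)
qed simp

lemma nilpotent_elem_subring_iff [simp]:
  "nilpotent_elem (R\<lparr>carrier := K\<rparr>) x \<longleftrightarrow> nilpotent_elem R x"
  by (simp add: nilpotent_elem_def nat_pow_def)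

lemma NK_pair_subring:
  assumes "subring K R" "a \<in> K" "b \<in> K" "NK_pair R a b"
  shows "NK_pair (R\<lparr>carrier := K\<rparr>) a b"
proof -
  have "K \<subseteq> carrier R" using assms(1) by (rule subringE(1))
  then show ?thesis using assms(2-4) unfolding NK_pair_def by (simp add: subset_iff)
qed

lemma countably_generated_algebra_if_countable:
  assumes "algebra_over F A \<phi>" "countable (carrier A)"
  shows "countably_generated_algebra F A \<phi>"
proof -
  have "ring A" and \<phi>: "\<phi> \<in> ring_hom F A" using assms(1) unfolding algebra_over_def by auto
  then have gens: "\<phi> ` carrier F \<union> carrier A \<subseteq> carrier A" using ring_hom_closed[OF \<phi>] by auto
  have "carrier A \<subseteq> generate_ring A (\<phi> ` carrier F \<union> carrier A)"
    by (auto intro: generate_ring.incl)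
  then have "carrier A = generate_ring A (\<phi> ` carrier F \<union> carrier A)"
    using ring.generate_ring_incl[OF \<open>ring A\<close> gens] by blast
  then show ?thesis
    using assms unfolding countably_generated_algebra_def by blast
qed

lemma algebra_over_ring_iso:
  assumes alg: "algebra_over F A \<phi>" and iso: "h \<in> ring_iso A B" and "ring B"
  shows "algebra_over F B (h \<circ> \<phi>)"
proof -
  have hom: "h \<in> ring_hom A B" and onto: "h ` carrier A = carrier B"
    using iso unfolding ring_iso_def bij_betw_def by auto
  have \<phi>: "\<phi> \<in> ring_hom F A" using alg unfolding algebra_over_def by blast
  have "h (\<phi> c) \<otimes>\<^bsub>B\<^esub> h x = h x \<otimes>\<^bsub>B\<^esub> h (\<phi> c)" if "c \<in> carrier F" "x \<in> carrier A" for c x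
    using alg that ring_hom_closed[OF \<phi>] unfolding algebra_over_def
    by (metis ring_hom_mult[OF hom])
  then have "\<forall>c\<in>carrier F. \<forall>y\<in>carrier B. (h \<circ> \<phi>) c \<otimes>\<^bsub>B\<^esub> y = y \<otimes>\<^bsub>B\<^esub> (h \<circ> \<phi>) c"
    unfolding onto[symmetric] by auto
  then show ?thesis
    using assms(3) ring_hom_trans[OF \<phi> hom] unfolding algebra_over_def by auto
qed

lemma NK_ring_iso:
  assumes "ring A" "ring B" and iso: "h \<in> ring_iso A B" and "NK A"
  shows "NK B"
proof -
  interpret B: ring B by fact
  obtain a b where ab: "NK_pair A a b" using assms(1,4) NK_iff_NK_pair by blast
  have hom: "ring_hom_ring A B h"
    using iso assms(1,2) by (intro ring_hom_ringI2) (auto simp: ring_iso_def)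
  have inv: "ring_hom_ring B A (inv_into (carrier A) h)"
    using ring_iso_set_sym[OF assms(1) iso] assms(1,2) by (intro ring_hom_ringI2) (auto simp: ring_iso_def)
  have onto: "h ` carrier A = carrier B" and inj: "inj_on h (carrier A)"
    using iso unfolding ring_iso_def bij_betw_def by auto
  have sum: "a \<oplus>\<^bsub>A\<^esub> b \<in> carrier A"
    using ab assms(1) unfolding NK_pair_def by (simp add: ring.ring_simprules(1))
  have "\<not> nilpotent_elem B (h (a \<oplus>\<^bsub>A\<^esub> b))"
  proof
    assume "nilpotent_elem B (h (a \<oplus>\<^bsub>A\<^esub> b))"
    then have "nilpotent_elem A (inv_into (carrier A) h (h (a \<oplus>\<^bsub>A\<^esub> b)))"
      using nilpotent_elem_ring_hom[OF inv] ring_hom_closed[OF ring_hom_ring.homh[OF hom] sum] by blast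
    then show False using inv_into_f_f[OF inj sum] ab unfolding NK_pair_def by simp
  qed
  moreover have "\<exists>r\<in>carrier A. \<exists>u\<in>carrier B. y = h r \<otimes>\<^bsub>B\<^esub> u \<and> (\<forall>z\<in>carrier B. u \<otimes>\<^bsub>B\<^esub> z = z \<otimes>\<^bsub>B\<^esub> u)"
    if y: "y \<in> carrier B" for y
  proof -
    obtain r where "y = h r" "r \<in> carrier A" using y unfolding onto[symmetric] by (rule imageE)
    then show ?thesis
      using ring_hom_closed[OF ring_hom_ring.homh[OF hom]]
      by (intro bexI[of _ r] bexI[of _ "\<one>\<^bsub>B\<^esub>"]) auto
  qed
  ultimately have "NK_pair B (h a) (h b)" by (intro NK_pair_ring_hom[OF hom ab])
  then show ?thesis using assms(2) NK_iff_NK_pair by blast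
qed

lemma countable_NK_algebra_on_nat:
  assumes alg: "algebra_over F A \<phi>" and "countable (carrier A)" "NK A"
  shows "\<exists>(B::nat ring) \<psi>. countably_generated_algebra F B \<psi> \<and> NK B"
proof -
  let ?h = "to_nat_on (carrier A)"
  have "ring A" using alg unfolding algebra_over_def by blast
  have inj: "inj_on ?h (carrier A)" using assms(2) by (rule inj_on_to_nat_on)
  have iso: "?h \<in> ring_iso A (image_ring ?h A)" using inj by (rule inj_imp_image_ring_iso)
  have ring: "ring (image_ring ?h A)" using ring.inj_imp_image_ring_is_ring[OF \<open>ring A\<close> inj] .
  have "countable (carrier (image_ring ?h A))" by (simp add: image_ring_carrier)
  then have "countably_generated_algebra F (image_ring ?h A) (?h \<circ> \<phi>)"
    using algebra_over_ring_iso[OF alg iso ring] by (rule countably_generated_algebra_if_countable[rotated])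
  then show ?thesis using NK_ring_iso[OF \<open>ring A\<close> ring iso assms(3)] by blast
qed

section \<open>Integer multiples of powers\<close>

definition int_multiples :: "('a, 'b) ring_scheme \<Rightarrow> int \<Rightarrow> 'a set" where
  "int_multiples R k = (\<lambda>s. [k] \<cdot>\<^bsub>R\<^esub> s) ` carrier R"

context ring
begin

lemmas int_smult_simps =
  add.int_pow_distrib add.int_pow_pow add_pow_ldistr_int add_pow_rdistr_int add.int_pow_closed
  add.int_pow_one add.int_pow_1 add.int_pow_inv

lemma int_multiples_ideal: "ideal (int_multiples R k) R"
proof (rule idealI)
  show "subgroup (int_multiples R k) (add_monoid R)"
  proof (rule add.subgroupI)
    fix x y assume "x \<in> int_multiples R k" "y \<in> int_multiples R k"
    then obtain s t where st: "s \<in> carrier R" "t \<in> carrier R" "x = [k] \<cdot> s" "y = [k] \<cdot> t"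
      unfolding int_multiples_def by blast
    have "\<ominus> x = [k] \<cdot> (\<ominus> s)" "x \<oplus> y = [k] \<cdot> (s \<oplus> t)"
      using st by (simp_all add: add.int_pow_inv add.int_pow_distrib)
    then show "\<ominus> x \<in> int_multiples R k" "x \<oplus> y \<in> int_multiples R k"
      using st unfolding int_multiples_def by auto
  qed (auto simp: int_multiples_def)
next
  fix a x assume "a \<in> int_multiples R k" "x \<in> carrier R"
  then obtain s where "s \<in> carrier R" "a = [k] \<cdot> s" unfolding int_multiples_def by blast
  then show "x \<otimes> a \<in> int_multiples R k" "a \<otimes> x \<in> int_multiples R k"
    using \<open>x \<in> carrier R\<close> unfolding int_multiples_def
    by (auto simp: add_pow_ldistr_int add_pow_rdistr_int)
qed (rule ring_axioms)

lemma int_multiples_mult: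
  assumes "x \<in> int_multiples R m" "y \<in> int_multiples R n"
  shows "x \<otimes> y \<in> int_multiples R (m * n)"
proof -
  obtain s t where st: "s \<in> carrier R" "t \<in> carrier R" "x = [m] \<cdot> s" "y = [n] \<cdot> t"
    using assms unfolding int_multiples_def by blast
  then have "x \<otimes> y = [(m * n)] \<cdot> (s \<otimes> t)"
    by (simp add: add_pow_ldistr_int add_pow_rdistr_int add.int_pow_pow mult.commute)
  then show ?thesis using st unfolding int_multiples_def by (intro image_eqI[of _ _ "s \<otimes> t"]) auto
qed

lemma pow_in_int_multiples:
  assumes c: "c \<in> carrier R" and primes: "\<And>p. Factorial_Ring.prime p \<Longrightarrow> \<exists>n::nat. c [^] n \<in> int_multiples R p"
    and "k \<noteq> 0"
  shows "\<exists>n::nat. c [^] n \<in> int_multiples R k"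
  using \<open>k \<noteq> 0\<close>
proof (induction k rule: prime_divisors_induct)
  case (unit k)
  then have "k * k = 1" using abs_mult_self_eq[of k] by simp
  then have "c [^] (0::nat) = [k] \<cdot> ([k] \<cdot> \<one>)" by (simp add: add.int_pow_pow)
  then show ?case unfolding int_multiples_def by blast
next
  case (factor p k)
  obtain n :: nat where "c [^] n \<in> int_multiples R p" using primes[OF factor.hyps(1)] ..
  moreover obtain m :: nat where "c [^] m \<in> int_multiples R k" using factor.IH factor.prems by auto
  ultimately have "c [^] n \<otimes> c [^] m \<in> int_multiples R (p * k)" by (rule int_multiples_mult)
  then have "c [^] (n + m) \<in> int_multiples R (p * k)" using c by (simp add: nat_pow_mult)
  then show ?case ..
qed simp

text \<open>If every prime divides a power of \<open>c\<close>, so does every \<open>k \<noteq> 0\<close>, and then a relation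
  \<open>k c\<^sup>n = 0\<close> would make \<open>c\<close> nilpotent.\<close>
lemma not_nilpotent_prime_or_torsion_free:
  assumes c: "c \<in> carrier R" and not_nil: "\<not> nilpotent_elem R c"
  shows "(\<exists>p. Factorial_Ring.prime p \<and> (\<forall>n::nat. c [^] n \<notin> int_multiples R p))
       \<or> (\<forall>k::int. k \<noteq> 0 \<longrightarrow> (\<forall>n::nat. [k] \<cdot> (c [^] n) \<noteq> \<zero>))"
proof (rule ccontr)
  assume contra: "\<not> ?thesis"
  then have primes: "\<And>p. Factorial_Ring.prime p \<Longrightarrow> \<exists>n::nat. c [^] n \<in> int_multiples R p"
    by auto
  from contra obtain k :: int and n :: nat where k: "k \<noteq> 0" "[k] \<cdot> (c [^] n) = \<zero>"
    by auto
  obtain N :: nat where "c [^] N \<in> int_multiples R k" using pow_in_int_multiples[OF c primes k(1)] ..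
  then obtain s where s: "s \<in> carrier R" "c [^] N = [k] \<cdot> s" unfolding int_multiples_def by auto
  have "c [^] (N + n) = c [^] N \<otimes> c [^] n" using c by (simp add: nat_pow_mult)
  also have "\<dots> = s \<otimes> [k] \<cdot> (c [^] n)" using c s by (simp add: add_pow_ldistr_int add_pow_rdistr_int)
  also have "\<dots> = \<zero>" using k(2) s by simp
  finally have "nilpotent_elem R c" unfolding nilpotent_elem_def ..
  with not_nil show False by contradiction
qed

end

section \<open>The case of a prime p: the algebra R/pR over Z_p\<close>

lemma (in ring_hom_ring) hom_add_pow_int:
  "x \<in> carrier R \<Longrightarrow> h ([k] \<cdot> x) = [(k::int)] \<cdot>\<^bsub>S\<^esub> h x"
  using group_hom.hom_int_pow[OF a_group_hom] by (simp add: add_pow_def)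

lemma algebra_over_residue_ring:
  fixes Q (structure)
  assumes "ring Q" "[p] \<cdot> \<one> = \<zero>"
  shows "algebra_over (residue_ring p) Q (\<lambda>k. [k] \<cdot> \<one>)"
proof -
  interpret ring Q by fact
  have mod_p: "[(k mod p)] \<cdot> \<one> = [k] \<cdot> \<one>" for k
  proof -
    have "[k] \<cdot> \<one> = [(k mod p)] \<cdot> \<one> \<oplus> [(k div p)] \<cdot> ([p] \<cdot> \<one>)"
      by (simp add: add.int_pow_pow add.int_pow_mult[symmetric] mult.commute)
    then show ?thesis using assms(2) by simp
  qed
  have mult: "[(k * l)] \<cdot> \<one> = [k] \<cdot> \<one> \<otimes> [l] \<cdot> \<one>" for k l :: int
    by (simp add: add_pow_ldistr_int add.int_pow_pow mult.commute)
  have "(\<lambda>k. [k] \<cdot> \<one>) \<in> ring_hom (residue_ring p) Q"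
    by (rule ring_hom_memI) (simp_all add: residue_ring_def mod_p mult add.int_pow_mult)
  moreover have "[k] \<cdot> \<one> \<otimes> x = x \<otimes> [k] \<cdot> \<one>" if "x \<in> carrier Q" for k :: int and x
    using that by (simp add: add_pow_ldistr_int add_pow_rdistr_int)
  ultimately show ?thesis
    unfolding algebra_over_def using assms(1) by blast
qed

lemma FactRing_carrier: "carrier (R Quot I) = a_r_coset R I ` carrier R"
  unfolding FactRing_def A_RCOSETS_def' by auto

lemma (in ring) algebra_over_quotient_int_multiples:
  "algebra_over (residue_ring p) (R Quot int_multiples R p) (\<lambda>k. [k] \<cdot>\<^bsub>R Quot int_multiples R p\<^esub> \<one>\<^bsub>R Quot int_multiples R p\<^esub>)"
proof (rule algebra_over_residue_ring)
  interpret I: ideal "int_multiples R p" R by (rule int_multiples_ideal)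
  interpret \<pi>: ring_hom_ring R "R Quot int_multiples R p" "(+>) (int_multiples R p)"
    by (rule I.rcos_ring_hom_ring)
  show "ring (R Quot int_multiples R p)" by (rule I.quotient_is_ring)
  have "[p] \<cdot> \<one> \<in> int_multiples R p" using one_closed unfolding int_multiples_def by (rule imageI)
  then have "int_multiples R p +> [p] \<cdot> \<one> = int_multiples R p" by (rule I.a_rcos_const)
  also have "\<dots> = \<zero>\<^bsub>R Quot int_multiples R p\<^esub>" unfolding FactRing_def by simp
  finally show "[p] \<cdot>\<^bsub>R Quot int_multiples R p\<^esub> \<one>\<^bsub>R Quot int_multiples R p\<^esub> = \<zero>\<^bsub>R Quot int_multiples R p\<^esub>"
    using \<pi>.hom_add_pow_int[of \<one> p] by simp
qed

lemma (in ring) NK_pair_quotient_int_multiples: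
  assumes ab: "NK_pair R a b" and not_div: "\<forall>n::nat. (a \<oplus> b) [^] n \<notin> int_multiples R p"
  shows "NK_pair (R Quot int_multiples R p) (int_multiples R p +> a) (int_multiples R p +> b)"
proof -
  let ?I = "int_multiples R p"
  interpret I: ideal ?I R by (rule int_multiples_ideal)
  interpret \<pi>: ring_hom_ring R "R Quot ?I" "(+>) ?I" by (rule I.rcos_ring_hom_ring)
  have a: "a \<in> carrier R" and b: "b \<in> carrier R" using ab unfolding NK_pair_def by auto
  have zero: "\<zero>\<^bsub>R Quot ?I\<^esub> = ?I" unfolding FactRing_def by simp
  have "\<not> nilpotent_elem (R Quot ?I) (?I +> (a \<oplus> b))"
  proof
    assume "nilpotent_elem (R Quot ?I) (?I +> (a \<oplus> b))"
    then obtain n :: nat where n: "(?I +> (a \<oplus> b)) [^]\<^bsub>R Quot ?I\<^esub> n = \<zero>\<^bsub>R Quot ?I\<^esub>"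
      unfolding nilpotent_elem_def ..
    have "?I +> (a \<oplus> b) [^] n = (?I +> (a \<oplus> b)) [^]\<^bsub>R Quot ?I\<^esub> n"
      using a b by (intro \<pi>.hom_nat_pow) simp
    then have "?I +> (a \<oplus> b) [^] n = ?I" unfolding n zero .
    then have "(a \<oplus> b) [^] n \<in> ?I" using I.a_rcos_self[of "(a \<oplus> b) [^] n"] a b by simp
    then show False using not_div by simp
  qed
  moreover have "\<exists>r\<in>carrier R. \<exists>u\<in>carrier (R Quot ?I). y = (?I +> r) \<otimes>\<^bsub>R Quot ?I\<^esub> u \<and>
      (\<forall>z\<in>carrier (R Quot ?I). u \<otimes>\<^bsub>R Quot ?I\<^esub> z = z \<otimes>\<^bsub>R Quot ?I\<^esub> u)"
    if y: "y \<in> carrier (R Quot ?I)" for y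
  proof -
    obtain r where "y = ?I +> r" "r \<in> carrier R" using y unfolding FactRing_carrier by (rule imageE)
    then show ?thesis by (intro bexI[of _ r] bexI[of _ "\<one>\<^bsub>R Quot ?I\<^esub>"]) auto
  qed
  ultimately show ?thesis by (intro NK_pair_ring_hom[OF \<pi>.ring_hom_ring_axioms ab])
qed

section \<open>The torsion-free case: the algebra Q \<otimes> R\<close>

context ring
begin

text \<open>A pair \<open>(s, m)\<close> with \<open>m > 0\<close> stands for the fraction \<open>s / m\<close>.\<close>
definition frac_rel :: "(('a \<times> int) \<times> ('a \<times> int)) set" where
  "frac_rel = {((s, m), (t, n)). s \<in> carrier R \<and> t \<in> carrier R \<and> m > 0 \<and> n > 0 \<and>
                 (\<exists>k > 0. [(k * n)] \<cdot> s = [(k * m)] \<cdot> t)}"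

abbreviation fraction :: "'a \<Rightarrow> int \<Rightarrow> ('a \<times> int) set" where
  "fraction s m \<equiv> frac_rel `` {(s, m)}"

lemma equiv_frac_rel: "equiv (carrier R \<times> {0<..}) frac_rel"
proof (rule equivI)
  show "frac_rel \<subseteq> (carrier R \<times> {0<..}) \<times> (carrier R \<times> {0<..})"
    by (auto simp: frac_rel_def)
  show "refl_on (carrier R \<times> {0<..}) frac_rel"
    by (rule refl_onI) (auto simp: frac_rel_def intro: exI[of _ 1])
  show "sym frac_rel"
    by (rule symI) (auto simp: frac_rel_def)
  show "trans frac_rel"
  proof (rule transI, clarify)
    fix s m t n u w
    assume "((s, m), (t, n)) \<in> frac_rel" "((t, n), (u, w)) \<in> frac_rel"
    then obtain k l where st: "s \<in> carrier R" "t \<in> carrier R" "u \<in> carrier R" "m > 0" "n > 0" "w > 0"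
      and k: "k > 0" "[(k * n)] \<cdot> s = [(k * m)] \<cdot> t" and l: "l > 0" "[(l * w)] \<cdot> t = [(l * n)] \<cdot> u"
      unfolding frac_rel_def by auto
    have "[(k * l * n * w)] \<cdot> s = [(l * w)] \<cdot> ([(k * n)] \<cdot> s)" using st by (simp add: int_smult_simps mult_ac)
    also have "\<dots> = [(k * m)] \<cdot> ([(l * w)] \<cdot> t)" using st k by (simp add: int_smult_simps mult_ac)
    also have "\<dots> = [(k * l * n * m)] \<cdot> u" using st l by (simp add: int_smult_simps mult_ac)
    finally show "((s, m), (u, w)) \<in> frac_rel"
      using st k l unfolding frac_rel_def by (auto intro!: exI[of _ "k * l * n"] simp: mult_ac)
  qed
qed

lemma fraction_eq_iff:
  assumes "s \<in> carrier R" "t \<in> carrier R" "m > 0" "n > 0"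
  shows "fraction s m = fraction t n \<longleftrightarrow> (\<exists>k > 0. [(k * n)] \<cdot> s = [(k * m)] \<cdot> t)"
proof -
  have "((s, m), (t, n)) \<in> frac_rel \<longleftrightarrow> (\<exists>k > 0. [(k * n)] \<cdot> s = [(k * m)] \<cdot> t)"
    using assms by (simp add: frac_rel_def)
  moreover have "fraction s m = fraction t n \<longleftrightarrow> ((s, m), (t, n)) \<in> frac_rel"
    using assms by (intro eq_equiv_class_iff[OF equiv_frac_rel]) auto
  ultimately show ?thesis by simp
qed

lemma fraction_eqI:
  assumes "s \<in> carrier R" "t \<in> carrier R" "m > 0" "n > 0" "[n] \<cdot> s = [m] \<cdot> t"
  shows "fraction s m = fraction t n"
  unfolding fraction_eq_iff[OF assms(1-4)] using assms(5) by (intro exI[of _ 1]) simp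

lemma frac_rel_add:
  assumes "((s, m), (s', m')) \<in> frac_rel" "((t, n), (t', n')) \<in> frac_rel"
  shows "(([n] \<cdot> s \<oplus> [m] \<cdot> t, m * n), ([n'] \<cdot> s' \<oplus> [m'] \<cdot> t', m' * n')) \<in> frac_rel"
proof -
  obtain k l where c: "s \<in> carrier R" "s' \<in> carrier R" "t \<in> carrier R" "t' \<in> carrier R"
    "m > 0" "m' > 0" "n > 0" "n' > 0"
    and k: "k > 0" "[(k * m')] \<cdot> s = [(k * m)] \<cdot> s'" and l: "l > 0" "[(l * n')] \<cdot> t = [(l * n)] \<cdot> t'"
    using assms unfolding frac_rel_def by auto
  have "[(k * l * (m' * n') * n)] \<cdot> s = [(l * n' * n)] \<cdot> ([(k * m')] \<cdot> s)"
    using c by (simp add: int_smult_simps mult_ac)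
  also have "\<dots> = [(k * l * (m * n) * n')] \<cdot> s'"
    using c by (simp add: k int_smult_simps mult_ac)
  finally have s: "[(k * l * (m' * n') * n)] \<cdot> s = [(k * l * (m * n) * n')] \<cdot> s'" .
  have "[(k * l * (m' * n') * m)] \<cdot> t = [(k * m' * m)] \<cdot> ([(l * n')] \<cdot> t)"
    using c by (simp add: int_smult_simps mult_ac)
  also have "\<dots> = [(k * l * (m * n) * m')] \<cdot> t'"
    using c by (simp add: l int_smult_simps mult_ac)
  finally have t: "[(k * l * (m' * n') * m)] \<cdot> t = [(k * l * (m * n) * m')] \<cdot> t'" .
  have "[(k * l * (m' * n'))] \<cdot> ([n] \<cdot> s \<oplus> [m] \<cdot> t) = [(k * l * (m * n))] \<cdot> ([n'] \<cdot> s' \<oplus> [m'] \<cdot> t')"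
    using c s t by (simp add: int_smult_simps mult.commute)
  then show ?thesis
    using c k l unfolding frac_rel_def by (auto intro!: exI[of _ "k * l"] add.m_closed add.int_pow_closed)
qed

lemma frac_rel_mult:
  assumes "((s, m), (s', m')) \<in> frac_rel" "((t, n), (t', n')) \<in> frac_rel"
  shows "((s \<otimes> t, m * n), (s' \<otimes> t', m' * n')) \<in> frac_rel"
proof -
  obtain k l where c: "s \<in> carrier R" "s' \<in> carrier R" "t \<in> carrier R" "t' \<in> carrier R"
    "m > 0" "m' > 0" "n > 0" "n' > 0"
    and k: "k > 0" "[(k * m')] \<cdot> s = [(k * m)] \<cdot> s'" and l: "l > 0" "[(l * n')] \<cdot> t = [(l * n)] \<cdot> t'"
    using assms unfolding frac_rel_def by auto
  have "[(k * l * (m' * n'))] \<cdot> (s \<otimes> t) = [(k * m')] \<cdot> s \<otimes> [(l * n')] \<cdot> t"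
    using c by (simp add: int_smult_simps mult_ac)
  also have "\<dots> = [(k * l * (m * n))] \<cdot> (s' \<otimes> t')"
    using c by (simp add: k l int_smult_simps mult_ac)
  finally show ?thesis
    using c k l unfolding frac_rel_def by (auto intro!: exI[of _ "k * l"])
qed

fun frac_add :: "'a \<times> int \<Rightarrow> 'a \<times> int \<Rightarrow> 'a \<times> int" where
  "frac_add (s, m) (t, n) = ([n] \<cdot> s \<oplus> [m] \<cdot> t, m * n)"

fun frac_mult :: "'a \<times> int \<Rightarrow> 'a \<times> int \<Rightarrow> 'a \<times> int" where
  "frac_mult (s, m) (t, n) = (s \<otimes> t, m * n)"

definition rat_localization :: "('a \<times> int) set ring" where
  "rat_localization =
     \<lparr>carrier = (carrier R \<times> {0<..}) // frac_rel,
      monoid.mult = (\<lambda>A B. \<Union>x\<in>A. \<Union>y\<in>B. frac_rel `` {frac_mult x y}),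
      one = fraction \<one> 1,
      ring.zero = fraction \<zero> 1,
      ring.add = (\<lambda>A B. \<Union>x\<in>A. \<Union>y\<in>B. frac_rel `` {frac_add x y})\<rparr>"

lemma fraction_add:
  assumes "s \<in> carrier R" "t \<in> carrier R" "m > 0" "n > 0"
  shows "fraction s m \<oplus>\<^bsub>rat_localization\<^esub> fraction t n = fraction ([n] \<cdot> s \<oplus> [m] \<cdot> t) (m * n)"
proof -
  have "congruent2 frac_rel frac_rel (\<lambda>x y. frac_rel `` {frac_add x y})"
    by (rule congruent2I', clarify) (simp add: equiv_class_eq[OF equiv_frac_rel frac_rel_add])
  then show ?thesis
    unfolding rat_localization_def using assms by (simp add: UN_equiv_class2[OF equiv_frac_rel equiv_frac_rel])
qed

lemma fraction_mult:
  assumes "s \<in> carrier R" "t \<in> carrier R" "m > 0" "n > 0"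
  shows "fraction s m \<otimes>\<^bsub>rat_localization\<^esub> fraction t n = fraction (s \<otimes> t) (m * n)"
proof -
  have "congruent2 frac_rel frac_rel (\<lambda>x y. frac_rel `` {frac_mult x y})"
    by (rule congruent2I', clarify) (simp add: equiv_class_eq[OF equiv_frac_rel frac_rel_mult])
  then show ?thesis
    unfolding rat_localization_def using assms by (simp add: UN_equiv_class2[OF equiv_frac_rel equiv_frac_rel])
qed

lemma rat_localization_cases:
  assumes "A \<in> carrier rat_localization"
  obtains s m where "s \<in> carrier R" "m > 0" "A = fraction s m"
  using assms unfolding rat_localization_def by (auto elim!: quotientE)

lemma fraction_in_carrier: "s \<in> carrier R \<Longrightarrow> m > 0 \<Longrightarrow> fraction s m \<in> carrier rat_localization"
  unfolding rat_localization_def by (auto intro: quotientI)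

lemma rat_localization_zero: "\<zero>\<^bsub>rat_localization\<^esub> = fraction \<zero> 1"
  and rat_localization_one: "\<one>\<^bsub>rat_localization\<^esub> = fraction \<one> 1"
  unfolding rat_localization_def by simp_all

lemma fraction_zero: "m > 0 \<Longrightarrow> fraction \<zero> m = \<zero>\<^bsub>rat_localization\<^esub>"
  unfolding rat_localization_zero by (simp add: fraction_eqI int_smult_simps)

lemma rat_localization_ring: "ring rat_localization"
proof (rule ringI)
  show "abelian_group rat_localization"
  proof (rule abelian_groupI)
    fix A B assume "A \<in> carrier rat_localization" "B \<in> carrier rat_localization"
    then show "A \<oplus>\<^bsub>rat_localization\<^esub> B \<in> carrier rat_localization"
      "A \<oplus>\<^bsub>rat_localization\<^esub> B = B \<oplus>\<^bsub>rat_localization\<^esub> A"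
      by (auto elim!: rat_localization_cases simp: fraction_add fraction_in_carrier int_smult_simps
          a_comm mult.commute)
  next
    fix A B C
    assume "A \<in> carrier rat_localization" "B \<in> carrier rat_localization" "C \<in> carrier rat_localization"
    then show "A \<oplus>\<^bsub>rat_localization\<^esub> B \<oplus>\<^bsub>rat_localization\<^esub> C =
               A \<oplus>\<^bsub>rat_localization\<^esub> (B \<oplus>\<^bsub>rat_localization\<^esub> C)"
      by (auto elim!: rat_localization_cases simp: fraction_add int_smult_simps a_assoc mult_ac)
  next
    fix A assume "A \<in> carrier rat_localization"
    then obtain s m where s: "s \<in> carrier R" "m > 0" "A = fraction s m" by (rule rat_localization_cases)
    then show "\<zero>\<^bsub>rat_localization\<^esub> \<oplus>\<^bsub>rat_localization\<^esub> A = A"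
      by (simp add: rat_localization_zero fraction_add int_smult_simps)
    have "fraction (\<ominus> s) m \<oplus>\<^bsub>rat_localization\<^esub> A = \<zero>\<^bsub>rat_localization\<^esub>"
      using s by (simp add: fraction_add int_smult_simps l_neg fraction_zero)
    then show "\<exists>B\<in>carrier rat_localization. B \<oplus>\<^bsub>rat_localization\<^esub> A = \<zero>\<^bsub>rat_localization\<^esub>"
      using s fraction_in_carrier[of "\<ominus> s" m] by auto
  qed (simp add: rat_localization_zero fraction_in_carrier)
next
  show "monoid rat_localization"
  proof (rule monoidI)
    fix A B assume "A \<in> carrier rat_localization" "B \<in> carrier rat_localization"
    then show "A \<otimes>\<^bsub>rat_localization\<^esub> B \<in> carrier rat_localization"
      by (auto elim!: rat_localization_cases simp: fraction_mult fraction_in_carrier)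
  next
    fix A B C
    assume "A \<in> carrier rat_localization" "B \<in> carrier rat_localization" "C \<in> carrier rat_localization"
    then show "A \<otimes>\<^bsub>rat_localization\<^esub> B \<otimes>\<^bsub>rat_localization\<^esub> C =
               A \<otimes>\<^bsub>rat_localization\<^esub> (B \<otimes>\<^bsub>rat_localization\<^esub> C)"
      by (auto elim!: rat_localization_cases simp: fraction_mult m_assoc mult.assoc)
  qed (auto elim!: rat_localization_cases simp: rat_localization_one fraction_mult fraction_in_carrier)
next
  fix A B C
  assume "A \<in> carrier rat_localization" "B \<in> carrier rat_localization" "C \<in> carrier rat_localization"
  then obtain s m t n u w where c: "s \<in> carrier R" "t \<in> carrier R" "u \<in> carrier R" "m > 0" "n > 0" "w > 0"
    and ABC: "A = fraction s m" "B = fraction t n" "C = fraction u w"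
    by (metis rat_localization_cases)
  show "(A \<oplus>\<^bsub>rat_localization\<^esub> B) \<otimes>\<^bsub>rat_localization\<^esub> C =
        A \<otimes>\<^bsub>rat_localization\<^esub> C \<oplus>\<^bsub>rat_localization\<^esub> B \<otimes>\<^bsub>rat_localization\<^esub> C"
    unfolding ABC using c
    by (simp add: fraction_add fraction_mult, intro fraction_eqI)
       (simp_all add: int_smult_simps l_distr mult_ac)
  show "C \<otimes>\<^bsub>rat_localization\<^esub> (A \<oplus>\<^bsub>rat_localization\<^esub> B) =
        C \<otimes>\<^bsub>rat_localization\<^esub> A \<oplus>\<^bsub>rat_localization\<^esub> C \<otimes>\<^bsub>rat_localization\<^esub> B"
    unfolding ABC using c
    by (simp add: fraction_add fraction_mult, intro fraction_eqI)
       (simp_all add: int_smult_simps r_distr mult_ac)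
qed

lemma fraction_nat_pow:
  assumes "s \<in> carrier R" "m > 0"
  shows "fraction s m [^]\<^bsub>rat_localization\<^esub> (n::nat) = fraction (s [^] n) (m ^ n)"
  by (induction n) (simp_all add: assms rat_localization_one fraction_mult mult.commute)

lemma fraction_ring_hom: "ring_hom_ring R rat_localization (\<lambda>s. fraction s 1)"
proof (rule ring_hom_ringI2[OF ring_axioms rat_localization_ring], rule ring_hom_memI)
qed (simp_all add: fraction_in_carrier fraction_add fraction_mult rat_localization_one int_smult_simps)

definition rat_to_localization :: "rat \<Rightarrow> ('a \<times> int) set" where
  "rat_to_localization q = (case quotient_of q of (a, b) \<Rightarrow> fraction ([a] \<cdot> \<one>) b)"

lemma rat_to_localization_of_int_div:
  assumes "b > 0"
  shows "rat_to_localization (of_int a / of_int b) = fraction ([a] \<cdot> \<one>) b"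
proof -
  obtain a' b' where q: "quotient_of (of_int a / of_int b) = (a', b')" by fastforce
  have "b' > 0" using quotient_of_denom_pos[OF q] .
  moreover have "of_int a' / of_int b' = (of_int a / of_int b :: rat)" using quotient_of_div[OF q] by simp
  then have "a' * b = a * b'" using assms \<open>b' > 0\<close> by (simp add: frac_eq_eq flip: of_int_mult)
  ultimately show ?thesis
    unfolding rat_to_localization_def q using assms
    by (simp add: fraction_eqI int_smult_simps mult.commute)
qed

lemma rat_cases_of_int_div:
  fixes q :: rat
  obtains a b where "b > 0" "q = of_int a / of_int b"
  by (cases q) (simp add: Fract_of_int_quotient)

lemma algebra_over_rat_localization: "algebra_over rat_ring rat_localization rat_to_localization"
  unfolding algebra_over_def
proof (intro conjI ballI rat_localization_ring)
  show "rat_to_localization \<in> ring_hom rat_ring rat_localization"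
  proof (rule ring_hom_memI)
    fix q r :: rat
    obtain a b where ab: "b > 0" "q = of_int a / of_int b" by (rule rat_cases_of_int_div)
    obtain c d where cd: "d > 0" "r = of_int c / of_int d" by (rule rat_cases_of_int_div)
    have bd: "b * d > 0" using ab cd by simp
    show "rat_to_localization q \<in> carrier rat_localization"
      using ab by (simp add: rat_to_localization_of_int_div fraction_in_carrier int_smult_simps)
    have "q \<otimes>\<^bsub>rat_ring\<^esub> r = of_int (a * c) / of_int (b * d)" using ab cd by (simp add: rat_ring_def)
    then have "rat_to_localization (q \<otimes>\<^bsub>rat_ring\<^esub> r) = fraction ([(a * c)] \<cdot> \<one>) (b * d)"
      by (simp only: rat_to_localization_of_int_div[OF bd])
    also have "\<dots> = rat_to_localization q \<otimes>\<^bsub>rat_localization\<^esub> rat_to_localization r"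
      using ab cd by (simp add: rat_to_localization_of_int_div fraction_mult int_smult_simps mult.commute)
    finally show "rat_to_localization (q \<otimes>\<^bsub>rat_ring\<^esub> r) =
      rat_to_localization q \<otimes>\<^bsub>rat_localization\<^esub> rat_to_localization r" .
    have "q \<oplus>\<^bsub>rat_ring\<^esub> r = of_int (a * d + c * b) / of_int (b * d)"
      using ab cd by (simp add: rat_ring_def field_simps)
    then have "rat_to_localization (q \<oplus>\<^bsub>rat_ring\<^esub> r) = fraction ([(a * d + c * b)] \<cdot> \<one>) (b * d)"
      by (simp only: rat_to_localization_of_int_div[OF bd])
    also have "\<dots> = rat_to_localization q \<oplus>\<^bsub>rat_localization\<^esub> rat_to_localization r"
      using ab cd by (simp add: rat_to_localization_of_int_div fraction_add int_smult_simps add.int_pow_mult mult.commute)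
    finally show "rat_to_localization (q \<oplus>\<^bsub>rat_ring\<^esub> r) =
      rat_to_localization q \<oplus>\<^bsub>rat_localization\<^esub> rat_to_localization r" .
  next
    show "rat_to_localization \<one>\<^bsub>rat_ring\<^esub> = \<one>\<^bsub>rat_localization\<^esub>"
      using rat_to_localization_of_int_div[of 1 1] by (simp add: rat_ring_def rat_localization_one)
  qed
next
  fix q :: rat and A assume "A \<in> carrier rat_localization"
  then obtain s m where "s \<in> carrier R" "m > 0" "A = fraction s m" by (rule rat_localization_cases)
  moreover obtain a b where "b > 0" "q = of_int a / of_int b" by (rule rat_cases_of_int_div)
  ultimately show "rat_to_localization q \<otimes>\<^bsub>rat_localization\<^esub> A = A \<otimes>\<^bsub>rat_localization\<^esub> rat_to_localization q"
    by (simp add: rat_to_localization_of_int_div fraction_mult int_smult_simps mult.commute)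
qed

lemma countable_rat_localization:
  "countable (carrier R) \<Longrightarrow> countable (carrier rat_localization)"
  unfolding rat_localization_def quotient_def by auto

text \<open>Every fraction \<open>s / m\<close> is \<open>s / 1\<close> times the central element \<open>1 / m\<close>, so right nil-ness
  transfers; torsion-freeness of the powers of \<open>a + b\<close> keeps \<open>(a + b) / 1\<close> from being nilpotent.\<close>
lemma NK_pair_rat_localization:
  assumes ab: "NK_pair R a b" and torsion_free: "\<forall>k::int. k > 0 \<longrightarrow> (\<forall>n::nat. [k] \<cdot> ((a \<oplus> b) [^] n) \<noteq> \<zero>)"
  shows "NK_pair rat_localization (fraction a 1) (fraction b 1)"
proof -
  have a: "a \<in> carrier R" and b: "b \<in> carrier R" using ab unfolding NK_pair_def by auto
  have "\<not> nilpotent_elem rat_localization (fraction (a \<oplus> b) 1)"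
  proof
    assume "nilpotent_elem rat_localization (fraction (a \<oplus> b) 1)"
    then obtain n :: nat where "fraction ((a \<oplus> b) [^] n) 1 = fraction \<zero> 1"
      using a b unfolding nilpotent_elem_def by (auto simp: fraction_nat_pow rat_localization_zero)
    then obtain k :: int where "k > 0" "[k] \<cdot> ((a \<oplus> b) [^] n) = \<zero>"
      using a b by (auto simp: fraction_eq_iff int_smult_simps)
    then show False using torsion_free by blast
  qed
  moreover have "\<exists>r\<in>carrier R. \<exists>u\<in>carrier rat_localization. A = fraction r 1 \<otimes>\<^bsub>rat_localization\<^esub> u \<and>
      (\<forall>Z\<in>carrier rat_localization. u \<otimes>\<^bsub>rat_localization\<^esub> Z = Z \<otimes>\<^bsub>rat_localization\<^esub> u)"
    if A: "A \<in> carrier rat_localization" for A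
  proof -
    obtain s m where s: "s \<in> carrier R" "m > 0" "A = fraction s m"
      using A by (rule rat_localization_cases)
    let ?u = "rat_to_localization (of_int 1 / of_int m)"
    have "?u = fraction ([(1::int)] \<cdot> \<one>) m" using s(2) by (rule rat_to_localization_of_int_div)
    then have "?u = fraction \<one> m" by simp
    then have "A = fraction s 1 \<otimes>\<^bsub>rat_localization\<^esub> ?u" using s by (simp add: fraction_mult)
    moreover have "?u \<in> carrier rat_localization"
      "\<forall>Z\<in>carrier rat_localization. ?u \<otimes>\<^bsub>rat_localization\<^esub> Z = Z \<otimes>\<^bsub>rat_localization\<^esub> ?u"
      using algebra_over_rat_localization ring_hom_closed
      unfolding algebra_over_def rat_ring_def by fastforce+
    ultimately show ?thesis using s by blast
  qed
  ultimately show ?thesis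
    using NK_pair_ring_hom[OF fraction_ring_hom ab] a b by (simp add: fraction_add int_smult_simps)
qed

end

lemma (in ring) NK_pair_countable_subring:
  assumes "NK_pair R a b"
  shows "\<exists>K. subring K R \<and> countable K \<and> NK_pair (R\<lparr>carrier := K\<rparr>) a b"
proof -
  have ab: "{a, b} \<subseteq> carrier R" using assms unfolding NK_pair_def by auto
  have "a \<in> generate_ring R {a, b}" "b \<in> generate_ring R {a, b}"
    by (auto intro: generate_ring.incl)
  then show ?thesis
    using assms generate_ring_is_subring[OF ab] countable_generate_ring[of "{a, b}" R]
    by (intro exI[of _ "generate_ring R {a, b}"]) (simp add: NK_pair_subring)
qed

lemma (in ring) countable_NK_pair_imp_cg_NK_algebra:
  assumes "countable (carrier R)" and ab: "NK_pair R a b"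
  shows "exists_cg_NK_algebra TYPE(nat)"
proof -
  have "a \<oplus> b \<in> carrier R" and "\<not> nilpotent_elem R (a \<oplus> b)"
    using ab unfolding NK_pair_def by auto
  from not_nilpotent_prime_or_torsion_free[OF this] show ?thesis
  proof (elim disjE exE conjE)
    fix p :: int
    assume p: "Factorial_Ring.prime p" and "\<forall>n::nat. (a \<oplus> b) [^] n \<notin> int_multiples R p"
    then have "NK (R Quot int_multiples R p)"
      using NK_pair_quotient_int_multiples[OF ab] ideal.quotient_is_ring[OF int_multiples_ideal]
        NK_iff_NK_pair by blast
    moreover have "countable (carrier (R Quot int_multiples R p))"
      using assms(1) by (simp add: FactRing_carrier)
    ultimately show ?thesis
      using countable_NK_algebra_on_nat[OF algebra_over_quotient_int_multiples] p
      unfolding exists_cg_NK_algebra_def by blast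
  next
    assume "\<forall>k::int. k \<noteq> 0 \<longrightarrow> (\<forall>n::nat. [k] \<cdot> ((a \<oplus> b) [^] n) \<noteq> \<zero>)"
    then have "NK_pair rat_localization (fraction a 1) (fraction b 1)"
      by (intro NK_pair_rat_localization[OF ab]) auto
    then have "NK rat_localization" using NK_iff_NK_pair[OF rat_localization_ring] by blast
    then show ?thesis
      using countable_NK_algebra_on_nat[OF algebra_over_rat_localization]
        countable_rat_localization[OF assms(1)]
      unfolding exists_cg_NK_algebra_def by blast
  qed
qed

theorem mainTheorem7:
  shows "((\<exists>R::'a ring. ring R \<and> NK R) \<longrightarrow> exists_cg_NK_algebra TYPE(nat))
       \<and> (exists_cg_NK_algebra TYPE('b) \<longrightarrow> (\<exists>R::'b ring. ring R \<and> NK R))"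
proof (intro conjI impI)
  assume "\<exists>R::'a ring. ring R \<and> NK R"
  then obtain R :: "'a ring" where R: "ring R" and "NK R" by blast
  then obtain a b where "NK_pair R a b" using NK_iff_NK_pair by blast
  then obtain K where K: "subring K R" "countable K" "NK_pair (R\<lparr>carrier := K\<rparr>) a b"
    using ring.NK_pair_countable_subring[OF R] by blast
  show "exists_cg_NK_algebra TYPE(nat)"
    using ring.countable_NK_pair_imp_cg_NK_algebra[OF ring.subring_is_ring[OF R K(1)]] K(2,3) by simp
next
  assume "exists_cg_NK_algebra TYPE('b)"
  then show "\<exists>R::'b ring. ring R \<and> NK R"
    unfolding exists_cg_NK_algebra_def countably_generated_algebra_def algebra_over_def by blast
qed

end
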